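(* In the $K$-tier network model described in the context with $W=0$, let tier $k$ use target SINR $\beta_k>0$ and rate $\mathcal R_k=\log_2(1+\beta_k)$, and define $$\mathcal F=\frac{\sum_{k=1}^K\lambda_k\mathcal A_k(1-\mathcal O_k^{int})\mathcal R_k}{\sum_{k=1}^K\lambda_k\mathcal A_k\big(\frac1\eta P_k+M_kP_C\big)+\sum_{k=1}^K\lambda_kP_S}$$ with constants $\eta\in(0,1]$, $P_C>0$, $P_S>0$. Regarded as a function of the access threshold $\epsilon$, $\lim_{\epsilon\to\infty}\mathcal F=0$.
   Context: Network model: $\mathcal K=\{1,\dots,K\}$. In $\mathbb R^2$, tier-$k$ BSs form a homogeneous PPP of intensity $\lambda_k>0$ and users a homogeneous PPP of intensity $\lambda_u>0$, all independent. Tier-$k$ BSs have transmit power $P_k>0$, $M_k\in\mathbb N$ antennas, bias $B_k>0$, path-loss exponent $\alpha_k>2$. $\Omega_k=P_kM_kB_k$, $\delta_k=2/\alpha_k$, $\Omega_{j,k}=\Omega_j/\Omega_k$, $\delta_{j,k}=\delta_j/\delta_k$. Access threshold $\epsilon>0$, $R_k=(\Omega_k/\epsilon)^{1/\alpha_k}$. Association: with $D_k$ the distance from a typical user to its nearest tier-$k$ BS, $\hat\rho_k=\Omega_kD_k^{-\alpha_k}$ if $D_k\le R_k$, else $0$; association with tier $k$ iff $\hat\rho_k>\hat\rho_j$ for all $j\ne k$, with probability $\mathcal T_k=\pi\lambda_k\int_0^{R_k^2}\exp(-\pi\sum_j\lambda_j\Omega_{j,k}^{\delta_j}r^{\delta_{j,k}})dr$.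 Activation probability of tier $j$: $\mathcal A_j=1-\exp\big(-\pi\lambda_u\int_0^{R_j^2}\exp(-\pi\sum_l\lambda_l\Omega_{l,j}^{\delta_l}r^{\delta_{l,j}})dr\big)$; active tier-$j$ BSs are modeled as a homogeneous PPP of intensity $\mathcal A_j\lambda_j$. Outage model: conditional on association with tier $k$, the serving distance $X_k$ has density $\frac{2\pi\lambda_k}{\mathcal T_k}x\exp(-\pi\sum_j\lambda_j\Omega_{j,k}^{\delta_j}x^{2\delta_{j,k}})$ on $(0,R_k]$; given $X_k$, interferers of tier $j$ are the points of independent homogeneous PPPs of intensity $\mathcal A_j\lambda_j$ outside the disk around the user of radius $\Omega_{j,k}^{1/\alpha_j}X_k^{\alpha_k/\alpha_j}$; $\|\mathbf h\|^2\sim\mathrm{Gamma}(M_k,1)$, an interferer of tier $j$ at distance $r$ contributes $P_jVr^{-\alpha_j}$ with $V\sim\mathrm{Exp}(1)$, all independent; $I_o$ is the total interference and $\mathcal O_k^{int}=\mathbb P\{P_k\|\mathbf h\|^2X_k^{-\alpha_k}/I_o<\beta_k\}$. $P_C$ is per-antenna circuit power, $P_S$ static power, $\eta$ amplifier efficiency. *)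

theory Defs
  imports "HOL-Probability.Probability"
begin

record netw =
  K :: nat
  lam :: "nat \<Rightarrow> real"
  lam_u :: real
  Pw :: "nat \<Rightarrow> real"
  Mant :: "nat \<Rightarrow> nat"
  Bias :: "nat \<Rightarrow> real"
  alpha :: "nat \<Rightarrow> real"

definition tiers :: "netw \<Rightarrow> nat set" where
  "tiers N = {1..K N}"

definition Omega :: "netw \<Rightarrow> nat \<Rightarrow> real" where
  "Omega N k = Pw N k * real (Mant N k) * Bias N k"

definition delta :: "netw \<Rightarrow> nat \<Rightarrow> real" where
  "delta N k = 2 / alpha N k"

definition Omega2 :: "netw \<Rightarrow> nat \<Rightarrow> nat \<Rightarrow> real" where
  "Omega2 N j k = Omega N j / Omega N k"

definition delta2 :: "netw \<Rightarrow> nat \<Rightarrow> nat \<Rightarrow> real" where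
  "delta2 N j k = delta N j / delta N k"

definition Racc :: "netw \<Rightarrow> real \<Rightarrow> nat \<Rightarrow> real" where
  "Racc N eps k = (Omega N k / eps) powr (1 / alpha N k)"

definition assoc_exp :: "netw \<Rightarrow> nat \<Rightarrow> real \<Rightarrow> real" where
  "assoc_exp N k r =
     (\<Sum>j\<in>tiers N. lam N j * Omega2 N j k powr delta N j * r powr delta2 N j k)"

definition Tassoc :: "netw \<Rightarrow> real \<Rightarrow> nat \<Rightarrow> real" where
  "Tassoc N eps k = pi * lam N k *
     integral {0..(Racc N eps k)\<^sup>2} (\<lambda>r. exp (- pi * assoc_exp N k r))"

definition Aact :: "netw \<Rightarrow> real \<Rightarrow> nat \<Rightarrow> real" where
  "Aact N eps j = 1 - exp (- pi * lam_u N *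
     integral {0..(Racc N eps j)\<^sup>2} (\<lambda>r. exp (- pi * assoc_exp N j r)))"

text \<open>Density of the serving distance X_k conditional on association with tier k,
  supported on (0, R_k].\<close>
definition serv_density :: "netw \<Rightarrow> real \<Rightarrow> nat \<Rightarrow> real \<Rightarrow> real" where
  "serv_density N eps k x =
     (if 0 < x \<and> x \<le> Racc N eps k then
        2 * pi * lam N k / Tassoc N eps k * x *
        exp (- pi * (\<Sum>j\<in>tiers N. lam N j * Omega2 N j k powr delta N j
                                      * x powr (2 * delta2 N j k)))
      else 0)"

text \<open>Homogeneous PPP of intensity mu on the plane, built from independent annuli
  {n <= |y| < n+1}: in annulus n a Poisson(mu * area) number of points, i.i.d. uniform
  in the annulus, each carrying an independent Exp(1) fading mark.
  A sample is a pair (number of points, sequence of (point, mark)).\<close>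
definition annulus :: "nat \<Rightarrow> (real \<times> real) set" where
  "annulus n = {y. real n \<le> norm y \<and> norm y < real n + 1}"

definition annulus_ppp :: "real \<Rightarrow> nat \<Rightarrow> (nat \<times> (nat \<Rightarrow> (real \<times> real) \<times> real)) measure" where
  "annulus_ppp mu n =
     measure_pmf (poisson_pmf (mu * pi * (2 * real n + 1))) \<Otimes>\<^sub>M
     (\<Pi>\<^sub>M i\<in>(UNIV::nat set).
        uniform_measure lborel (annulus n) \<Otimes>\<^sub>M density lborel (exponential_density 1))"

definition marked_ppp :: "real \<Rightarrow> (nat \<Rightarrow> nat \<times> (nat \<Rightarrow> (real \<times> real) \<times> real)) measure" where
  "marked_ppp mu = (\<Pi>\<^sub>M n\<in>(UNIV::nat set). annulus_ppp mu n)"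

definition active_ppps :: "netw \<Rightarrow> real \<Rightarrow>
    (nat \<Rightarrow> nat \<Rightarrow> nat \<times> (nat \<Rightarrow> (real \<times> real) \<times> real)) measure" where
  "active_ppps N eps = (\<Pi>\<^sub>M j\<in>tiers N. marked_ppp (Aact N eps j * lam N j))"

definition excl_radius :: "netw \<Rightarrow> nat \<Rightarrow> nat \<Rightarrow> real \<Rightarrow> real" where
  "excl_radius N k j x = Omega2 N j k powr (1 / alpha N j) * x powr (alpha N k / alpha N j)"

definition interference :: "netw \<Rightarrow> nat \<Rightarrow> real \<Rightarrow>
    (nat \<Rightarrow> nat \<Rightarrow> nat \<times> (nat \<Rightarrow> (real \<times> real) \<times> real)) \<Rightarrow> ennreal" where
  "interference N k x \<omega> =
     (\<Sum>j\<in>tiers N. \<Sum>n. \<Sum>i<fst (\<omega> j n).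
        (case snd (\<omega> j n) i of (y, v) \<Rightarrow>
           if excl_radius N k j x < norm y
           then ennreal (Pw N j * v * norm y powr (- alpha N j)) else 0))"

text \<open>Joint law of (X_k, |h|^2, interferer configuration): independent, with
  |h|^2 ~ Gamma(M_k,1) = Erlang(M_k - 1 + 1, 1).\<close>
definition outage_space :: "netw \<Rightarrow> real \<Rightarrow> nat \<Rightarrow>
    (real \<times> real \<times> (nat \<Rightarrow> nat \<Rightarrow> nat \<times> (nat \<Rightarrow> (real \<times> real) \<times> real))) measure" where
  "outage_space N eps k =
     density lborel (\<lambda>x. ennreal (serv_density N eps k x)) \<Otimes>\<^sub>M
     (density lborel (erlang_density (Mant N k - 1) 1) \<Otimes>\<^sub>M active_ppps N eps)"

text \<open>Outage probability O_k^int = P{ P_k |h|^2 X_k^(-alpha_k) / I_o < beta_k },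
  written without division: P_k |h|^2 X_k^(-alpha_k) < beta_k I_o.\<close>
definition outage :: "netw \<Rightarrow> (nat \<Rightarrow> real) \<Rightarrow> real \<Rightarrow> nat \<Rightarrow> real" where
  "outage N beta eps k =
     measure (outage_space N eps k)
       {(x, g, \<omega>) \<in> space (outage_space N eps k).
          ennreal (Pw N k * g * x powr (- alpha N k)) < ennreal (beta k) * interference N k x \<omega>}"

definition EE :: "netw \<Rightarrow> (nat \<Rightarrow> real) \<Rightarrow> real \<Rightarrow> real \<Rightarrow> real \<Rightarrow> real \<Rightarrow> real" where
  "EE N beta eta PC PS eps =
     (\<Sum>k\<in>tiers N. lam N k * Aact N eps k * (1 - outage N beta eps k) * log 2 (1 + beta k)) /
     ((\<Sum>k\<in>tiers N. lam N k * Aact N eps k * (Pw N k / eta + real (Mant N k) * PC))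
      + (\<Sum>k\<in>tiers N. lam N k * PS))"

end

theory Submission imports Defs "HOL-Real_Asymp.Real_Asymp" begin

text \<open>As \<open>\<epsilon> \<rightarrow> \<infinity>\<close> every access radius \<open>R\<^sub>k\<close> tends to \<open>0\<close>, and
  \<open>\<A>\<^sub>k \<le> 1 - exp (-\<pi> \<lambda>\<^sub>u R\<^sub>k\<^sup>2) \<le> \<pi> \<lambda>\<^sub>u R\<^sub>k\<^sup>2\<close> vanishes with it. The outage probabilities stay
  bounded: once \<open>R\<^sub>k \<le> 1\<close> the association exponent is at most its value at \<open>r = 1\<close>,
  which bounds \<open>\<T>\<^sub>k\<close> below by a multiple of \<open>R\<^sub>k\<^sup>2\<close> and hence the total mass of the
  serving-distance density above by a constant. The denominator of \<open>\<F>\<close> is at least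
  the static power \<open>\<Sum>\<^sub>k \<lambda>\<^sub>k P\<^sub>S > 0\<close>, so \<open>\<F>\<close> is squeezed to \<open>0\<close>.\<close>

lemma measure_le_of_emeasure_space_le:
  assumes "emeasure M (space M) \<le> ennreal c" and "0 \<le> c"
  shows "measure M A \<le> c"
proof (cases "A \<in> sets M")
  case True
  then have "emeasure M A \<le> ennreal c"
    using emeasure_space[of M A] assms(1) by (metis order_trans)
  then show ?thesis
    using assms(2) by (simp add: measure_def enn2real_leI)
qed (simp add: measure_notin_sets assms(2))

lemma emeasure_space_pair_prob_space:
  assumes "prob_space P"
  shows "emeasure (M \<Otimes>\<^sub>M P) (space (M \<Otimes>\<^sub>M P)) = emeasure M (space M)"
proof -
  interpret P: prob_space P by (fact assms)
  have "emeasure (M \<Otimes>\<^sub>M P) (space M \<times> space P) = emeasure M (space M) * emeasure P (space P)"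
    by (intro P.emeasure_pair_measure_Times) auto
  then show ?thesis
    by (simp add: space_pair_measure P.emeasure_space_1)
qed

lemma ball_subset_annulus: "ball (real n + 1/2, 0::real) (1/2) \<subseteq> annulus n"
proof
  fix y :: "real \<times> real"
  assume "y \<in> ball (real n + 1/2, 0) (1/2)"
  then have "norm ((real n + 1/2, 0) - y) < 1/2"
    by (simp add: dist_norm)
  moreover have "norm (real n + 1/2, (0::real)) = real n + 1/2"
    by (simp add: norm_Pair)
  ultimately show "y \<in> annulus n"
    using norm_triangle_ineq2[of "(real n + 1/2, 0::real)" y]
      norm_triangle_sub[of y "(real n + 1/2, 0::real)"]
    by (auto simp: annulus_def norm_minus_commute)
qed

lemma prob_space_uniform_annulus: "prob_space (uniform_measure lborel (annulus n))"
proof (rule prob_space_uniform_measure)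
  have "annulus n \<in> sets lborel"
    unfolding annulus_def by measurable
  then have "emeasure lborel (ball (real n + 1/2, 0::real) (1/2)) \<le> emeasure lborel (annulus n)"
    by (intro emeasure_mono ball_subset_annulus)
  moreover have "0 < measure lborel (ball (real n + 1/2, 0::real) (1/2))"
    using content_ball_pos[of "1/2" "(real n + 1/2, 0::real)"] by simp
  then have "emeasure lborel (ball (real n + 1/2, 0::real) (1/2)) \<noteq> 0"
    by (metis emeasure_lborel_ball_finite less_irrefl measure_def enn2real_0)
  ultimately show "emeasure lborel (annulus n) \<noteq> 0"
    by (metis le_zero_eq)
  have "bounded (annulus n)"
    unfolding annulus_def bounded_iff by (intro exI[of _ "real n + 1"]) auto
  then show "emeasure lborel (annulus n) \<noteq> \<infinity>"
    using emeasure_bounded_finite by fastforce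
qed

lemma prob_space_active_ppps: "prob_space (active_ppps N eps)"
  unfolding active_ppps_def marked_ppp_def annulus_ppp_def
  by (intro prob_space_PiM prob_space_pair prob_space_measure_pmf prob_space_uniform_annulus
      prob_space_exponential_density) auto

locale tiered_network =
  fixes N :: netw
  assumes lam_pos: "k \<in> tiers N \<Longrightarrow> lam N k > 0"
    and Pw_pos: "k \<in> tiers N \<Longrightarrow> Pw N k > 0"
    and Mant_ge_1: "k \<in> tiers N \<Longrightarrow> Mant N k \<ge> 1"
    and Bias_pos: "k \<in> tiers N \<Longrightarrow> Bias N k > 0"
    and alpha_pos: "k \<in> tiers N \<Longrightarrow> alpha N k > 0"
    and lam_u_pos: "lam_u N > 0"
begin

lemma lam_nonneg: "k \<in> tiers N \<Longrightarrow> 0 \<le> lam N k"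
  using lam_pos by (simp add: less_imp_le)

lemma Omega_pos: "k \<in> tiers N \<Longrightarrow> Omega N k > 0"
  unfolding Omega_def using Pw_pos[of k] Mant_ge_1[of k] Bias_pos[of k] by simp

lemma delta2_pos: "j \<in> tiers N \<Longrightarrow> k \<in> tiers N \<Longrightarrow> delta2 N j k > 0"
  unfolding delta2_def delta_def using alpha_pos by simp

lemma assoc_exp_nonneg: "0 \<le> assoc_exp N k r"
  unfolding assoc_exp_def using lam_nonneg by (intro sum_nonneg) (auto intro!: mult_nonneg_nonneg)

lemma assoc_exp_mono:
  assumes "k \<in> tiers N" "0 \<le> r" "r \<le> s"
  shows "assoc_exp N k r \<le> assoc_exp N k s"
  unfolding assoc_exp_def
proof (intro sum_mono mult_left_mono)
  fix j assume "j \<in> tiers N"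
  then show "r powr delta2 N j k \<le> s powr delta2 N j k"
    using assms delta2_pos[of j k] by (intro powr_mono2) auto
  show "0 \<le> lam N j * Omega2 N j k powr delta N j"
    using lam_pos[of j] \<open>j \<in> tiers N\<close> by simp
qed

lemma continuous_on_assoc_integrand:
  "k \<in> tiers N \<Longrightarrow> continuous_on {0..} (\<lambda>r. exp (- pi * assoc_exp N k r))"
  unfolding assoc_exp_def using delta2_pos
  by (intro continuous_intros continuous_on_powr') auto

lemma assoc_integral_bounds:
  assumes "k \<in> tiers N" "0 \<le> X"
  shows "integral {0..X} (\<lambda>r. exp (- pi * assoc_exp N k r)) \<le> X"
    and "X \<le> 1 \<Longrightarrow> X * exp (- pi * assoc_exp N k 1)
           \<le> integral {0..X} (\<lambda>r. exp (- pi * assoc_exp N k r))"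
proof -
  have int: "(\<lambda>r. exp (- pi * assoc_exp N k r)) integrable_on {0..X}"
    by (intro integrable_continuous_interval continuous_on_subset
        [OF continuous_on_assoc_integrand[OF assms(1)]]) auto
  have "integral {0..X} (\<lambda>r. exp (- pi * assoc_exp N k r)) \<le> integral {0..X} (\<lambda>r. 1)"
    using int assoc_exp_nonneg by (intro integral_le) auto
  then show "integral {0..X} (\<lambda>r. exp (- pi * assoc_exp N k r)) \<le> X"
    using assms(2) by simp
  assume "X \<le> 1"
  then have "integral {0..X} (\<lambda>r. exp (- pi * assoc_exp N k 1))
      \<le> integral {0..X} (\<lambda>r. exp (- pi * assoc_exp N k r))"
    using int assoc_exp_mono[OF assms(1)] by (intro integral_le) auto
  then show "X * exp (- pi * assoc_exp N k 1) \<le> integral {0..X} (\<lambda>r. exp (- pi * assoc_exp N k r))"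
    using assms(2) by simp
qed

lemma Aact_bounds:
  assumes "k \<in> tiers N"
  shows "0 \<le> Aact N eps k" and "Aact N eps k \<le> pi * lam_u N * (Racc N eps k)\<^sup>2"
proof -
  define I where "I = integral {0..(Racc N eps k)\<^sup>2} (\<lambda>r. exp (- pi * assoc_exp N k r))"
  have "0 \<le> I"
    unfolding I_def by (intro integral_nonneg integrable_continuous_interval continuous_on_subset
        [OF continuous_on_assoc_integrand[OF assms]]) auto
  then have "0 \<le> pi * lam_u N * I"
    using lam_u_pos by simp
  moreover have "Aact N eps k = 1 - exp (- (pi * lam_u N * I))"
    unfolding Aact_def I_def by simp
  ultimately show "0 \<le> Aact N eps k"
    by simp
  have "1 - exp (- (pi * lam_u N * I)) \<le> pi * lam_u N * I"
    using exp_ge_add_one_self[of "- (pi * lam_u N * I)"] by linarith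
  also have "\<dots> \<le> pi * lam_u N * (Racc N eps k)\<^sup>2"
    using assoc_integral_bounds(1)[OF assms, of "(Racc N eps k)\<^sup>2"] lam_u_pos
    unfolding I_def by simp
  finally show "Aact N eps k \<le> pi * lam_u N * (Racc N eps k)\<^sup>2"
    unfolding \<open>Aact N eps k = _\<close> .
qed

lemma Racc_pos: "k \<in> tiers N \<Longrightarrow> eps > 0 \<Longrightarrow> Racc N eps k > 0"
  unfolding Racc_def using Omega_pos[of k] by simp

lemma Racc_sq_tendsto_0: "k \<in> tiers N \<Longrightarrow> ((\<lambda>eps. (Racc N eps k)\<^sup>2) \<longlongrightarrow> 0) at_top"
proof -
  assume k: "k \<in> tiers N"
  have "\<And>(c::real) p. c > 0 \<Longrightarrow> p > 0 \<Longrightarrow> ((\<lambda>e. ((c / e) powr p)\<^sup>2) \<longlongrightarrow> 0) at_top"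
    by real_asymp
  then show ?thesis
    unfolding Racc_def using Omega_pos[OF k] alpha_pos[OF k] by simp
qed

lemma Tassoc_lower_bound:
  assumes "k \<in> tiers N" "(Racc N eps k)\<^sup>2 \<le> 1"
  shows "pi * lam N k * (Racc N eps k)\<^sup>2 * exp (- pi * assoc_exp N k 1) \<le> Tassoc N eps k"
  unfolding Tassoc_def using assoc_integral_bounds(2)[OF assms(1) _ assms(2)] lam_pos[OF assms(1)]
  by (simp add: mult.assoc)

lemma serv_density_le:
  assumes "k \<in> tiers N" "Tassoc N eps k > 0"
  shows "serv_density N eps k x
           \<le> 2 * pi * lam N k / Tassoc N eps k * Racc N eps k * indicator {0..Racc N eps k} x"
proof (cases "0 < x \<and> x \<le> Racc N eps k")
  case True
  have "0 \<le> (\<Sum>j\<in>tiers N. lam N j * Omega2 N j k powr delta N j * x powr (2 * delta2 N j k))"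
    using lam_nonneg by (intro sum_nonneg) (auto intro!: mult_nonneg_nonneg)
  then have "exp (- pi * (\<Sum>j\<in>tiers N. lam N j * Omega2 N j k powr delta N j
      * x powr (2 * delta2 N j k))) \<le> 1"
    by simp
  moreover have "0 \<le> 2 * pi * lam N k / Tassoc N eps k"
    using assms lam_pos[OF assms(1)] by simp
  ultimately have "2 * pi * lam N k / Tassoc N eps k * x * exp (- pi * (\<Sum>j\<in>tiers N.
      lam N j * Omega2 N j k powr delta N j * x powr (2 * delta2 N j k)))
    \<le> 2 * pi * lam N k / Tassoc N eps k * Racc N eps k * 1"
    using True assms lam_pos[OF assms(1)] by (intro mult_mono mult_left_mono) auto
  then show ?thesis
    using True unfolding serv_density_def by simp
qed (use assms lam_pos[OF assms(1)] in \<open>auto simp: serv_density_def Racc_def indicator_def\<close>)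

lemma emeasure_serv_density_le:
  assumes "k \<in> tiers N" "eps > 0" "(Racc N eps k)\<^sup>2 \<le> 1"
  shows "emeasure (density lborel (\<lambda>x. ennreal (serv_density N eps k x))) UNIV
           \<le> ennreal (2 * exp (pi * assoc_exp N k 1))"
proof -
  define R where "R = Racc N eps k"
  define T where "T = Tassoc N eps k"
  define c where "c = 2 * pi * lam N k / T"
  have R: "R > 0"
    unfolding R_def using Racc_pos assms by simp
  have low: "pi * lam N k * R\<^sup>2 * exp (- pi * assoc_exp N k 1) \<le> T"
    unfolding R_def T_def using Tassoc_lower_bound assms by simp
  moreover have low_pos: "0 < pi * lam N k * R\<^sup>2 * exp (- pi * assoc_exp N k 1)"
    using R lam_pos[OF assms(1)] by simp
  ultimately have T: "T > 0"
    by linarith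
  then have c: "0 \<le> c"
    unfolding c_def using lam_pos[OF assms(1)] by simp
  have "(\<lambda>x. ennreal (serv_density N eps k x)) \<in> borel_measurable lborel"
    unfolding serv_density_def by measurable
  then have "emeasure (density lborel (\<lambda>x. ennreal (serv_density N eps k x))) UNIV
        = (\<integral>\<^sup>+x. ennreal (serv_density N eps k x) \<partial>lborel)"
    by (simp add: emeasure_density)
  also have "\<dots> \<le> (\<integral>\<^sup>+x. ennreal (c * R * indicator {0..R} x) \<partial>lborel)"
    using serv_density_le[OF assms(1)] T
    by (intro nn_integral_mono ennreal_leI) (simp add: R_def T_def c_def)
  also have "\<dots> = ennreal (c * R * R)"
    using R c
    by (simp add: ennreal_mult' ennreal_indicator nn_integral_cmult_indicator ennreal_mult)
  also have "\<dots> \<le> ennreal (2 * exp (pi * assoc_exp N k 1))"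
  proof (intro ennreal_leI)
    have "c * R * R = 2 * pi * lam N k * R\<^sup>2 / T"
      unfolding c_def by (simp add: power2_eq_square)
    also have "\<dots> \<le> 2 * pi * lam N k * R\<^sup>2 / (pi * lam N k * R\<^sup>2 * exp (- pi * assoc_exp N k 1))"
      using low low_pos lam_pos[OF assms(1)] by (intro divide_left_mono) auto
    also have "\<dots> = 2 * exp (pi * assoc_exp N k 1)"
      using R lam_pos[OF assms(1)] by (simp add: exp_minus field_simps)
    finally show "c * R * R \<le> 2 * exp (pi * assoc_exp N k 1)" .
  qed
  finally show ?thesis .
qed

lemma outage_bounds:
  assumes "k \<in> tiers N" "eps > 0" "(Racc N eps k)\<^sup>2 \<le> 1"
  shows "0 \<le> outage N beta eps k" and "outage N beta eps k \<le> 2 * exp (pi * assoc_exp N k 1)"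
proof -
  show "0 \<le> outage N beta eps k"
    unfolding outage_def by simp
  have "prob_space (density lborel (erlang_density (Mant N k - 1) 1) \<Otimes>\<^sub>M active_ppps N eps)"
    by (intro prob_space_pair prob_space_erlang_density prob_space_active_ppps) auto
  then have "emeasure (outage_space N eps k) (space (outage_space N eps k))
      = emeasure (density lborel (\<lambda>x. ennreal (serv_density N eps k x))) UNIV"
    unfolding outage_space_def by (simp add: emeasure_space_pair_prob_space)
  also have "\<dots> \<le> ennreal (2 * exp (pi * assoc_exp N k 1))"
    by (rule emeasure_serv_density_le[OF assms])
  finally show "outage N beta eps k \<le> 2 * exp (pi * assoc_exp N k 1)"
    unfolding outage_def by (intro measure_le_of_emeasure_space_le) auto
qed

lemma abs_rate_term_le:
  assumes "k \<in> tiers N" "eps > 0" "(Racc N eps k)\<^sup>2 \<le> 1"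
  shows "\<bar>lam N k * Aact N eps k * (1 - outage N beta eps k) * L\<bar>
    \<le> lam N k * (pi * lam_u N * (Racc N eps k)\<^sup>2) * (1 + 2 * exp (pi * assoc_exp N k 1)) * \<bar>L\<bar>"
proof -
  have "\<bar>1 - outage N beta eps k\<bar> \<le> 1 + 2 * exp (pi * assoc_exp N k 1)"
    using outage_bounds[OF assms, of beta] by linarith
  then show ?thesis
    using lam_pos[OF assms(1)] Aact_bounds[OF assms(1), of eps]
    by (simp add: abs_mult mult_mono mult_right_mono)
qed

lemma static_power_pos: "tiers N \<noteq> {} \<Longrightarrow> PS > 0 \<Longrightarrow> (\<Sum>k\<in>tiers N. lam N k * PS) > 0"
  using lam_pos by (intro sum_pos) (auto simp: tiers_def)

lemma norm_EE_le:
  assumes "tiers N \<noteq> {}" "0 \<le> eta" "0 \<le> PC" "PS > 0"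
    and "eps > 0" "\<And>k. k \<in> tiers N \<Longrightarrow> (Racc N eps k)\<^sup>2 \<le> 1"
  shows "norm (EE N beta eta PC PS eps)
    \<le> (\<Sum>k\<in>tiers N. lam N k * (pi * lam_u N * (Racc N eps k)\<^sup>2)
          * (1 + 2 * exp (pi * assoc_exp N k 1)) * \<bar>log 2 (1 + beta k)\<bar>)
        / (\<Sum>k\<in>tiers N. lam N k * PS)" (is "_ \<le> ?bound")
proof -
  let ?num = "\<Sum>k\<in>tiers N. lam N k * Aact N eps k * (1 - outage N beta eps k) * log 2 (1 + beta k)"
  let ?dyn = "\<Sum>k\<in>tiers N. lam N k * Aact N eps k * (Pw N k / eta + real (Mant N k) * PC)"
  let ?static = "\<Sum>k\<in>tiers N. lam N k * PS"
  have "0 < ?static"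
    using assms(1,4) by (rule static_power_pos)
  have "0 \<le> ?dyn"
    using Aact_bounds(1) lam_nonneg less_imp_le[OF Pw_pos] assms(2,3)
    by (intro sum_nonneg) (auto intro!: mult_nonneg_nonneg add_nonneg_nonneg)
  have "norm (EE N beta eta PC PS eps) = \<bar>?num\<bar> / (?dyn + ?static)"
    unfolding EE_def using \<open>0 \<le> ?dyn\<close> \<open>0 < ?static\<close> by simp
  also have "\<dots> \<le> \<bar>?num\<bar> / ?static"
    using \<open>0 \<le> ?dyn\<close> \<open>0 < ?static\<close> by (intro divide_left_mono) auto
  also have "\<dots> \<le> ?bound"
    using \<open>0 < ?static\<close> assms(5,6)
    by (auto intro!: divide_right_mono order_trans[OF sum_abs] sum_mono abs_rate_term_le)
  finally show ?thesis .
qed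

lemma EE_tendsto_0:
  assumes "tiers N \<noteq> {}" "0 \<le> eta" "0 \<le> PC" "PS > 0"
  shows "((\<lambda>eps. EE N beta eta PC PS eps) \<longlongrightarrow> 0) at_top"
proof -
  have fin: "finite (tiers N)"
    unfolding tiers_def by simp
  define g where "g eps = (\<Sum>k\<in>tiers N. lam N k * (pi * lam_u N * (Racc N eps k)\<^sup>2)
    * (1 + 2 * exp (pi * assoc_exp N k 1)) * \<bar>log 2 (1 + beta k)\<bar>)
    / (\<Sum>k\<in>tiers N. lam N k * PS)" for eps
  have "(g \<longlongrightarrow> (\<Sum>k\<in>tiers N. lam N k * (pi * lam_u N * 0)
    * (1 + 2 * exp (pi * assoc_exp N k 1)) * \<bar>log 2 (1 + beta k)\<bar>)
    / (\<Sum>k\<in>tiers N. lam N k * PS)) at_top"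
    unfolding g_def using static_power_pos[OF assms(1,4)]
    by (intro tendsto_intros Racc_sq_tendsto_0) auto
  then have g_tendsto_0: "(g \<longlongrightarrow> 0) at_top"
    by simp
  have "eventually (\<lambda>eps. \<forall>k\<in>tiers N. (Racc N eps k)\<^sup>2 < 1) at_top"
    using fin by (intro eventually_ball_finite ballI order_tendstoD(2)[OF Racc_sq_tendsto_0]) auto
  then have "eventually (\<lambda>eps. norm (EE N beta eta PC PS eps) \<le> g eps) at_top"
    using eventually_gt_at_top[of 0]
  proof eventually_elim
    case (elim eps)
    then have "\<And>k. k \<in> tiers N \<Longrightarrow> (Racc N eps k)\<^sup>2 \<le> 1"
      by (simp add: less_imp_le)
    from norm_EE_le[OF assms \<open>eps > 0\<close> this] show ?case
      unfolding g_def .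
  qed
  then show ?thesis
    using g_tendsto_0 by (rule Lim_null_comparison)
qed

end

theorem proposition2:
  fixes N :: netw and beta :: "nat \<Rightarrow> real" and eta PC PS :: real
  assumes "K N \<ge> 1"
    and "\<forall>k\<in>tiers N. lam N k > 0 \<and> Pw N k > 0 \<and> Mant N k \<ge> 1 \<and> Bias N k > 0
                      \<and> alpha N k > 2 \<and> beta k > 0"
    and "lam_u N > 0"
    and "0 < eta" and "eta \<le> 1" and "PC > 0" and "PS > 0"
  shows "((\<lambda>eps. EE N beta eta PC PS eps) \<longlongrightarrow> 0) at_top"
proof -
  interpret tiered_network N
    using assms(2,3) by unfold_locales auto
  have "1 \<in> tiers N"
    using assms(1) unfolding tiers_def by simp
  then show ?thesis
    using assms(4,6,7) by (intro EE_tendsto_0) auto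
qed

end
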